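(* Consider the parallel multiple access channel power allocation game with $K\ge 1$ users and $A\ge 1$ nodes, as described in the context, with random channel gains $g_{k\alpha}$. Let $p\in\Delta$ be a Nash equilibrium of the game, and let $\mathcal{G}$ be any multigraph that represents $p$. Then, almost surely (with respect to the law of the channel gains), $\mathcal{G}$ is a forest, i.e. it contains no cycles (where two distinct edges joining the same pair of nodes also count as a cycle).
   Context: Setting: users $\mathcal{K}=\{1,\dots,K\}$, nodes $\mathcal{A}=\{1,\dots,A\}$. User $k$ has maximum power $P_k>0$ and strategy set $\Delta_k=\{p_k\in\mathbb{R}^{\mathcal{A}}: p_{k\alpha}\ge 0,\ \sum_\alpha p_{k\alpha}=P_k\}$; the profile space is $\Delta=\prod_k\Delta_k$. Payoffs are $u_k(p)=\sum_{\alpha\in\mathcal{A}} b_\alpha\log\bigl(1+\frac{g_{k\alpha}p_{k\alpha}}{\sigma_\alpha^2+\sum_{\ell\neq k}g_{\ell\alpha}p_{\ell\alpha}}\bigr)$, with constants $b_\alpha>0$, $\sigma_\alpha^2>0$, and channel gains $g_{k\alpha}>0$ which are random, drawn from a continuous (nonatomic) probability distribution on the positive reals; all probabilistic statements refer to the law of the $g_{k\alpha}$. A profile $q\in\Delta$ is a Nash equilibrium if $u_k(q)\ge u_k(q_{-k};q_k')$ for all $k$ and all $q_k'\in\Delta_k$. The support of $p_k$ is $\mathrm{supp}(p_k)=\{\alpha: p_{k\alpha}>0\}$. A multigraph $\mathcal{G}=(\mathcal{V},\mathcal{E})$ represents $p\in\Delta$ if $\mathcal{V}=\mathcal{A}$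 and, for each user $k$, there is a node $\alpha\in\mathrm{supp}(p_k)$ (the hub of $k$) which is joined by an edge (owned by user $k$) to every other node $\beta\in\mathrm{supp}(p_k)\setminus\{\alpha\}$, and $\mathcal{E}$ consists exactly of these edges over all users. *)

theory Defs
  imports "HOL-Probability.Probability"
begin

definition users :: "nat \<Rightarrow> nat set" where "users K = {1..K}"
definition nodes :: "nat \<Rightarrow> nat set" where "nodes A = {1..A}"

definition strat_set :: "nat \<Rightarrow> (nat \<Rightarrow> real) \<Rightarrow> real \<Rightarrow> (nat \<Rightarrow> real) set" where
  "strat_set A P Pk = {q. (\<forall>\<alpha>\<in>nodes A. q \<alpha> \<ge> 0) \<and> (\<Sum>\<alpha>\<in>nodes A. q \<alpha>) = Pk}"

definition profile_space :: "nat \<Rightarrow> nat \<Rightarrow> (nat \<Rightarrow> real) \<Rightarrow> (nat \<Rightarrow> nat \<Rightarrow> real) set" where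
  "profile_space K A P = {p. \<forall>k\<in>users K. p k \<in> strat_set A P (P k)}"

definition payoff :: "nat \<Rightarrow> nat \<Rightarrow> (nat \<Rightarrow> real) \<Rightarrow> (nat \<Rightarrow> real) \<Rightarrow> (nat \<times> nat \<Rightarrow> real)
    \<Rightarrow> (nat \<Rightarrow> nat \<Rightarrow> real) \<Rightarrow> nat \<Rightarrow> real" where
  "payoff K A b \<sigma>2 g p k = (\<Sum>\<alpha>\<in>nodes A. b \<alpha> * ln (1 + g (k, \<alpha>) * p k \<alpha> /
      (\<sigma>2 \<alpha> + (\<Sum>l\<in>users K - {k}. g (l, \<alpha>) * p l \<alpha>))))"

definition nash_eq :: "nat \<Rightarrow> nat \<Rightarrow> (nat \<Rightarrow> real) \<Rightarrow> (nat \<Rightarrow> real) \<Rightarrow> (nat \<Rightarrow> real)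
    \<Rightarrow> (nat \<times> nat \<Rightarrow> real) \<Rightarrow> (nat \<Rightarrow> nat \<Rightarrow> real) \<Rightarrow> bool" where
  "nash_eq K A P b \<sigma>2 g q \<longleftrightarrow> q \<in> profile_space K A P \<and>
     (\<forall>k\<in>users K. \<forall>q'\<in>strat_set A P (P k).
        payoff K A b \<sigma>2 g q k \<ge> payoff K A b \<sigma>2 g (q(k := q')) k)"

definition supp :: "nat \<Rightarrow> (nat \<Rightarrow> nat \<Rightarrow> real) \<Rightarrow> nat \<Rightarrow> nat set" where
  "supp A p k = {\<alpha>\<in>nodes A. p k \<alpha> > 0}"

text \<open>A multigraph on vertex set nodes A is given by its edge set; an edge is a triple
  (k, alpha, beta): owned by user k, joining nodes alpha and beta. Distinct triples are
  distinct edges (so parallel edges of different users are allowed).\<close>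

type_synonym edge = "nat \<times> nat \<times> nat"

definition ends :: "edge \<Rightarrow> nat set" where
  "ends e = {fst (snd e), snd (snd e)}"

definition represents :: "nat \<Rightarrow> nat \<Rightarrow> (nat \<Rightarrow> nat \<Rightarrow> real) \<Rightarrow> edge set \<Rightarrow> bool" where
  "represents K A p E \<longleftrightarrow> (\<exists>hub :: nat \<Rightarrow> nat.
      (\<forall>k\<in>users K. hub k \<in> supp A p k) \<and>
      E = {(k, hub k, \<beta>) | k \<beta>. k \<in> users K \<and> \<beta> \<in> supp A p k \<and> \<beta> \<noteq> hub k})"

text \<open>A cycle: n >= 2 distinct vertices v_0..v_{n-1} and n distinct edges e_0..e_{n-1}
  of E, with e_i joining v_i and v_{(i+1) mod n}. For n = 2 this is a pair of distinct
  parallel edges.\<close>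

definition has_cycle :: "nat set \<Rightarrow> edge set \<Rightarrow> bool" where
  "has_cycle V E \<longleftrightarrow> (\<exists>vs es. length vs \<ge> 2 \<and> length es = length vs \<and>
      distinct vs \<and> distinct es \<and> set vs \<subseteq> V \<and> set es \<subseteq> E \<and>
      (\<forall>i<length vs. ends (es ! i) = {vs ! i, vs ! ((i + 1) mod length vs)}))"

definition is_forest :: "nat set \<Rightarrow> edge set \<Rightarrow> bool" where
  "is_forest V E \<longleftrightarrow> \<not> has_cycle V E"

end

theory Submission
  imports Defs
begin

text \<open>At a Nash equilibrium each user k equalises its marginal utility
  b(a) g(k,a) / T(a) over its support, T(a) being the total power received at node a.
  Both endpoints of an edge lie in the support of its owner, so multiplying these equalities
  around a cycle v(0), ..., v(n-1) with owners k(0), ..., k(n-1) cancels the factors b/T and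
  leaves the identity  prod g(k(i), v(i)) = prod g(k(i), v(i+1)).
  The edges of one user form a star, hence the owners along a cycle are not all equal; where the
  owner changes, at k(i) \<noteq> k(i+1), the gain g(k(i+1), v(i+1)) occurs on the left-hand side
  only. So the identity determines that gain from the others, an event of probability zero
  for atomless gains, and there are only countably many cycle patterns.\<close>

lemma prod_lessThan_rotate:
  fixes n :: nat
  shows "(\<Prod>m<n. f ((m + 1) mod n)) = (\<Prod>m<n. f m :: 'a::comm_monoid_mult)"
proof (cases n)
  case (Suc n')
  have "(\<Prod>m<Suc n'. f ((m + 1) mod Suc n')) = (\<Prod>m<n'. f (Suc m)) * f 0"
    by simp
  also have "\<dots> = (\<Prod>m<Suc n'. f m)"
    by (simp only: prod.lessThan_Suc_shift mult.commute)
  finally show ?thesis using Suc by simp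
qed simp

lemma Suc_mod_inj:
  fixes n :: nat
  assumes "m < n" "i < n" "(m + 1) mod n = (i + 1) mod n"
  shows "m = i"
  using assms by (cases "m + 1 = n"; cases "i + 1 = n") auto

lemma cyclic_nth_eq_0:
  assumes "\<forall>m<length xs. xs ! m = xs ! ((m + 1) mod length xs)" "i < length xs"
  shows "xs ! i = xs ! 0"
  using assms(2)
proof (induction i)
  case (Suc i)
  then show ?case using assms(1)[rule_format, of i] by simp
qed simp

lemma star_not_has_cycle:
  assumes star: "\<forall>e\<in>E. fst e = k \<and> fst (snd e) = h \<and> snd (snd e) \<noteq> h"
  shows "\<not> has_cycle V E"
proof
  assume "has_cycle V E"
  then obtain vs es where len: "length vs \<ge> 2" "length es = length vs"
    and dist: "distinct vs" "distinct es" and sub: "set es \<subseteq> E"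
    and ends: "\<forall>i<length vs. ends (es ! i) = {vs ! i, vs ! ((i + 1) mod length vs)}"
    unfolding has_cycle_def by blast
  define n where "n = length vs"
  have edge: "fst (es ! i) = k \<and> fst (snd (es ! i)) = h \<and> snd (snd (es ! i)) \<noteq> h"
    if "i < n" for i
  proof -
    have "es ! i \<in> E" using sub that len by (auto simp: n_def)
    then show ?thesis using star by blast
  qed
  have cycle_edge: "{h, snd (snd (es ! i))} = {vs ! i, vs ! ((i + 1) mod n)}" if "i < n" for i
  proof -
    have "ends (es ! i) = {vs ! i, vs ! ((i + 1) mod n)}" using ends that by (simp add: n_def)
    then show ?thesis using edge[OF that] by (simp add: ends_def)
  qed
  have vs_inj: "vs ! i = vs ! j \<longleftrightarrow> i = j" if "i < n" "j < n" for i j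
    using dist(1) that by (simp add: n_def nth_eq_iff_index_eq)
  show False
  proof (cases "n = 2")
    case True
    then have "snd (snd (es ! 0)) = snd (snd (es ! 1))"
      using cycle_edge[of 0] cycle_edge[of 1] edge[of 0] edge[of 1] by (auto simp: doubleton_eq_iff)
    then have "es ! 0 = es ! 1"
      using edge[of 0] edge[of 1] True by (simp add: prod_eq_iff)
    then show False using dist(2) len True by (simp add: nth_eq_iff_index_eq n_def)
  next
    case False
    then have n3: "n \<ge> 3" using len by (simp add: n_def)
    have "h \<in> {vs ! 0, vs ! 1}" "h \<in> {vs ! 1, vs ! 2}" "h \<in> {vs ! 2, vs ! (3 mod n)}"
      using cycle_edge[of 0] cycle_edge[of 1] cycle_edge[of 2] n3
      by (auto simp: numeral_2_eq_2 numeral_3_eq_3)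
    moreover have "3 mod n \<noteq> 1" "3 mod n < n" using n3 by (cases "n = 3", auto)
    ultimately show False
      using vs_inj[of 0 1] vs_inj[of 0 2] vs_inj[of 1 2] vs_inj[of 1 "3 mod n"] n3 by auto
  qed
qed

text \<open>Node vs ! i is joined to vs ! ((i + 1) mod length vs) by an edge of user ks ! i.\<close>

definition mixed_owner_cycle :: "nat \<Rightarrow> nat \<Rightarrow> nat list \<Rightarrow> nat list \<Rightarrow> bool" where
  "mixed_owner_cycle K A vs ks \<longleftrightarrow> length vs \<ge> 2 \<and> length ks = length vs \<and> distinct vs \<and>
     set vs \<subseteq> nodes A \<and> set ks \<subseteq> users K \<and>
     (\<exists>i<length vs. ks ! i \<noteq> ks ! ((i + 1) mod length vs))"

lemma represents_edges:
  assumes "represents K A p E"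
  obtains hub where "\<And>e. e \<in> E \<Longrightarrow> fst e \<in> users K \<and> fst (snd e) = hub (fst e) \<and>
    snd (snd e) \<noteq> hub (fst e) \<and> ends e \<subseteq> supp A p (fst e)"
proof -
  obtain hub where "\<forall>k\<in>users K. hub k \<in> supp A p k"
    and "E = {(k, hub k, \<beta>) | k \<beta>. k \<in> users K \<and> \<beta> \<in> supp A p k \<and> \<beta> \<noteq> hub k}"
    using assms unfolding represents_def by blast
  then show thesis by (intro that) (auto simp: ends_def)
qed

lemma represents_has_cycleE:
  assumes rep: "represents K A p E" and cyc: "has_cycle (nodes A) E"
  obtains vs ks where "mixed_owner_cycle K A vs ks"
    and "\<And>i. i < length vs \<Longrightarrow> ks ! i \<in> users K \<and>
           vs ! i \<in> supp A p (ks ! i) \<and> vs ! ((i + 1) mod length vs) \<in> supp A p (ks ! i)"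
proof -
  obtain hub where edge: "\<And>e. e \<in> E \<Longrightarrow> fst e \<in> users K \<and> fst (snd e) = hub (fst e) \<and>
      snd (snd e) \<noteq> hub (fst e) \<and> ends e \<subseteq> supp A p (fst e)"
    using represents_edges[OF rep] by blast
  obtain vs es where len: "length vs \<ge> 2" "length es = length vs"
    and dist: "distinct vs" "distinct es" and sub: "set vs \<subseteq> nodes A" "set es \<subseteq> E"
    and ends: "\<forall>i<length vs. ends (es ! i) = {vs ! i, vs ! ((i + 1) mod length vs)}"
    using cyc unfolding has_cycle_def by blast
  define n where "n = length vs"
  define ks where "ks = map fst es"
  have es_edge: "es ! i \<in> E" "fst (es ! i) = ks ! i" if "i < n" for i
    using sub that len by (auto simp: ks_def n_def)
  have in_supp: "ks ! i \<in> users K \<and> vs ! i \<in> supp A p (ks ! i) \<and> vs ! ((i + 1) mod n) \<in> supp A p (ks ! i)"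
    if "i < n" for i
    using edge[OF es_edge(1)[OF that]] ends that by (simp add: es_edge(2)[OF that] n_def)
  have owners_differ: "\<exists>i<n. ks ! i \<noteq> ks ! ((i + 1) mod n)"
  proof (rule ccontr)
    assume "\<not> ?thesis"
    then have "ks ! i = ks ! 0" if "i < n" for i
      using cyclic_nth_eq_0[of ks i] that len by (simp add: ks_def n_def)
    then have "\<forall>e\<in>set es. fst e = ks ! 0 \<and> fst (snd e) = hub (ks ! 0) \<and> snd (snd e) \<noteq> hub (ks ! 0)"
      using edge es_edge len by (metis in_set_conv_nth n_def)
    moreover have "has_cycle (nodes A) (set es)"
      unfolding has_cycle_def using len dist sub ends by blast
    ultimately show False using star_not_has_cycle by blast
  qed
  have "set ks \<subseteq> users K"
  proof
    fix k assume "k \<in> set ks"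
    then obtain i where "i < n" "k = ks ! i" using len by (auto simp: in_set_conv_nth ks_def n_def)
    then show "k \<in> users K" using in_supp by blast
  qed
  then have "mixed_owner_cycle K A vs ks"
    using len dist sub owners_differ by (simp add: mixed_owner_cycle_def ks_def n_def)
  with in_supp that show thesis by (simp add: n_def)
qed

definition interference :: "nat \<Rightarrow> (nat \<Rightarrow> real) \<Rightarrow> (nat \<times> nat \<Rightarrow> real) \<Rightarrow> (nat \<Rightarrow> nat \<Rightarrow> real)
    \<Rightarrow> nat \<Rightarrow> nat \<Rightarrow> real" where
  "interference K \<sigma>2 g p k \<gamma> = \<sigma>2 \<gamma> + (\<Sum>l\<in>users K - {k}. g (l, \<gamma>) * p l \<gamma>)"

definition received_power :: "nat \<Rightarrow> (nat \<Rightarrow> real) \<Rightarrow> (nat \<times> nat \<Rightarrow> real) \<Rightarrow> (nat \<Rightarrow> nat \<Rightarrow> real)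
    \<Rightarrow> nat \<Rightarrow> real" where
  "received_power K \<sigma>2 g p \<gamma> = \<sigma>2 \<gamma> + (\<Sum>l\<in>users K. g (l, \<gamma>) * p l \<gamma>)"

lemma received_power_eq_interference:
  "k \<in> users K \<Longrightarrow> received_power K \<sigma>2 g p \<gamma> = interference K \<sigma>2 g p k \<gamma> + g (k, \<gamma>) * p k \<gamma>"
  unfolding received_power_def interference_def
  by (subst sum.remove[of _ k]) (auto simp: users_def)

lemma payoff_fun_upd:
  "payoff K A b \<sigma>2 g (p(k := q)) k =
     (\<Sum>\<gamma>\<in>nodes A. b \<gamma> * ln (1 + g (k, \<gamma>) * q \<gamma> / interference K \<sigma>2 g p k \<gamma>))"
  unfolding payoff_def interference_def by (intro sum.cong refl) auto

context
  fixes K A :: nat and P b \<sigma>2 :: "nat \<Rightarrow> real" and g :: "nat \<times> nat \<Rightarrow> real"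
    and p :: "nat \<Rightarrow> nat \<Rightarrow> real"
  assumes noise_pos: "\<forall>\<alpha>\<in>nodes A. \<sigma>2 \<alpha> > 0"
    and gain_nonneg: "\<forall>k\<in>users K. \<forall>\<alpha>\<in>nodes A. g (k, \<alpha>) \<ge> 0"
    and nash: "nash_eq K A P b \<sigma>2 g p"
begin

lemma nash_power_nonneg: "k \<in> users K \<Longrightarrow> \<gamma> \<in> nodes A \<Longrightarrow> p k \<gamma> \<ge> 0"
  using nash by (auto simp: nash_eq_def profile_space_def strat_set_def)

lemma interference_pos: "\<gamma> \<in> nodes A \<Longrightarrow> interference K \<sigma>2 g p k \<gamma> > 0"
  unfolding interference_def
  by (intro add_pos_nonneg sum_nonneg mult_nonneg_nonneg)
    (use noise_pos gain_nonneg nash_power_nonneg in auto)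

lemma received_power_pos: "\<gamma> \<in> nodes A \<Longrightarrow> received_power K \<sigma>2 g p \<gamma> > 0"
  unfolding received_power_def
  by (intro add_pos_nonneg sum_nonneg mult_nonneg_nonneg)
    (use noise_pos gain_nonneg nash_power_nonneg in auto)

lemma payoff_deviation_has_derivative:
  assumes k: "k \<in> users K"
  shows "DERIV (\<lambda>t. payoff K A b \<sigma>2 g (p(k := \<lambda>\<gamma>. p k \<gamma> + t * e \<gamma>)) k) 0 :>
    (\<Sum>\<gamma>\<in>nodes A. b \<gamma> * g (k, \<gamma>) * e \<gamma> / received_power K \<sigma>2 g p \<gamma>)"
  unfolding payoff_fun_upd
proof (rule DERIV_sum)
  fix \<gamma> assume \<gamma>: "\<gamma> \<in> nodes A"
  have I: "interference K \<sigma>2 g p k \<gamma> > 0" using interference_pos[OF \<gamma>] .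
  have "1 + g (k, \<gamma>) * p k \<gamma> / interference K \<sigma>2 g p k \<gamma> > 0"
    using I gain_nonneg nash_power_nonneg k \<gamma> by (simp add: add_pos_nonneg)
  then show "DERIV (\<lambda>t. b \<gamma> * ln (1 + g (k, \<gamma>) * (p k \<gamma> + t * e \<gamma>) / interference K \<sigma>2 g p k \<gamma>)) 0 :>
      b \<gamma> * g (k, \<gamma>) * e \<gamma> / received_power K \<sigma>2 g p \<gamma>"
    unfolding received_power_eq_interference[OF k] using I
    by (auto intro!: derivative_eq_intros simp: field_simps)
qed

text \<open>Otherwise shifting power from \<alpha> to \<beta> would increase the payoff of user k.\<close>

lemma nash_marginal_le:
  assumes k: "k \<in> users K" and \<alpha>: "\<alpha> \<in> supp A p k" and \<beta>: "\<beta> \<in> nodes A"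
  shows "b \<beta> * g (k, \<beta>) / received_power K \<sigma>2 g p \<beta> \<le> b \<alpha> * g (k, \<alpha>) / received_power K \<sigma>2 g p \<alpha>"
proof (rule ccontr)
  define w where "w \<gamma> = b \<gamma> * g (k, \<gamma>) / received_power K \<sigma>2 g p \<gamma>" for \<gamma>
  define e :: "nat \<Rightarrow> real" where "e \<gamma> = (if \<gamma> = \<beta> then 1 else 0) - (if \<gamma> = \<alpha> then 1 else 0)" for \<gamma>
  define q where "q t \<gamma> = p k \<gamma> + t * e \<gamma>" for t \<gamma>
  define \<phi> where "\<phi> t = payoff K A b \<sigma>2 g (p(k := q t)) k" for t
  assume "\<not> ?thesis"
  then have increasing: "w \<beta> - w \<alpha> > 0" by (simp add: w_def)
  have \<alpha>_nodes: "\<alpha> \<in> nodes A" and \<alpha>_pos: "p k \<alpha> > 0" using \<alpha> by (auto simp: supp_def)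
  have fin: "finite (nodes A)" by (simp add: nodes_def)
  have "DERIV \<phi> 0 :> (\<Sum>\<gamma>\<in>nodes A. b \<gamma> * g (k, \<gamma>) * e \<gamma> / received_power K \<sigma>2 g p \<gamma>)"
    unfolding \<phi>_def q_def by (rule payoff_deviation_has_derivative[OF k])
  also have "(\<Sum>\<gamma>\<in>nodes A. b \<gamma> * g (k, \<gamma>) * e \<gamma> / received_power K \<sigma>2 g p \<gamma>) =
      (\<Sum>\<gamma>\<in>nodes A. (if \<gamma> = \<beta> then w \<gamma> else 0) - (if \<gamma> = \<alpha> then w \<gamma> else 0))"
    by (intro sum.cong) (auto simp: e_def w_def)
  also have "\<dots> = w \<beta> - w \<alpha>"
    using fin \<alpha>_nodes \<beta> by (simp add: sum_subtractf)
  finally obtain d where d: "d > 0" "\<And>h. h > 0 \<Longrightarrow> h < d \<Longrightarrow> \<phi> 0 < \<phi> (0 + h)"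
    using DERIV_pos_inc_right increasing by blast
  define h where "h = min (d / 2) (p k \<alpha>)"
  have h: "h > 0" "h < d" "h \<le> p k \<alpha>" using d \<alpha>_pos by (auto simp: h_def)
  have "q h \<in> strat_set A P (P k)"
  proof -
    have "\<forall>\<gamma>\<in>nodes A. q h \<gamma> \<ge> 0"
      using h nash_power_nonneg[OF k] by (auto simp: q_def e_def)
    moreover have "(\<Sum>\<gamma>\<in>nodes A. e \<gamma>) = 0"
      using fin \<alpha>_nodes \<beta> by (simp add: e_def sum_subtractf)
    then have "(\<Sum>\<gamma>\<in>nodes A. q h \<gamma>) = (\<Sum>\<gamma>\<in>nodes A. p k \<gamma>)"
      by (simp add: q_def sum.distrib flip: sum_distrib_left)
    ultimately show ?thesis
      using nash k by (auto simp: nash_eq_def profile_space_def strat_set_def)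
  qed
  moreover have "q 0 = p k" by (simp add: q_def fun_eq_iff)
  ultimately have "\<phi> h \<le> \<phi> 0"
    using nash k by (auto simp: nash_eq_def \<phi>_def)
  then show False using d(2)[OF h(1,2)] by simp
qed

lemma nash_marginal_eq:
  assumes "k \<in> users K" "\<alpha> \<in> supp A p k" "\<beta> \<in> supp A p k"
  shows "b \<beta> * g (k, \<beta>) / received_power K \<sigma>2 g p \<beta> = b \<alpha> * g (k, \<alpha>) / received_power K \<sigma>2 g p \<alpha>"
  using nash_marginal_le[OF assms(1,2)] nash_marginal_le[OF assms(1,3)] assms(2,3)
  by (force simp: supp_def)

lemma nash_cycle_gain_products_eq:
  assumes b_pos: "\<forall>\<alpha>\<in>nodes A. b \<alpha> > 0"
    and cycle: "\<And>i. i < length vs \<Longrightarrow> ks ! i \<in> users K \<and>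
      vs ! i \<in> supp A p (ks ! i) \<and> vs ! ((i + 1) mod length vs) \<in> supp A p (ks ! i)"
  shows "(\<Prod>i<length vs. g (ks ! i, vs ! i)) = (\<Prod>i<length vs. g (ks ! i, vs ! ((i + 1) mod length vs)))"
proof -
  define n where "n = length vs"
  define r where "r \<gamma> = b \<gamma> / received_power K \<sigma>2 g p \<gamma>" for \<gamma>
  have balance: "g (ks ! i, vs ! i) * r (vs ! i) = g (ks ! i, vs ! ((i + 1) mod n)) * r (vs ! ((i + 1) mod n))"
    if "i < n" for i
    using nash_marginal_eq[of "ks ! i" "vs ! ((i + 1) mod n)" "vs ! i"] cycle that
    by (simp add: r_def n_def mult.commute)
  have "(\<Prod>i<n. g (ks ! i, vs ! i)) * (\<Prod>i<n. r (vs ! i)) = (\<Prod>i<n. g (ks ! i, vs ! i) * r (vs ! i))"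
    by (simp add: prod.distrib)
  also have "\<dots> = (\<Prod>i<n. g (ks ! i, vs ! ((i + 1) mod n)) * r (vs ! ((i + 1) mod n)))"
    using balance by (intro prod.cong) auto
  also have "\<dots> = (\<Prod>i<n. g (ks ! i, vs ! ((i + 1) mod n))) * (\<Prod>i<n. r (vs ! i))"
    by (simp only: prod.distrib prod_lessThan_rotate[where f = "\<lambda>i. r (vs ! i)"])
  finally have "(\<Prod>i<n. g (ks ! i, vs ! i)) * (\<Prod>i<n. r (vs ! i)) =
      (\<Prod>i<n. g (ks ! i, vs ! ((i + 1) mod n))) * (\<Prod>i<n. r (vs ! i))" .
  moreover have "r (vs ! i) \<noteq> 0" if "i < n" for i
  proof -
    have "vs ! i \<in> nodes A" using cycle[of i] that by (auto simp: supp_def n_def)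
    then show ?thesis using b_pos received_power_pos[of "vs ! i"] by (force simp: r_def)
  qed
  ultimately show ?thesis by (simp add: n_def)
qed

lemma nash_represents_is_forest:
  assumes b_pos: "\<forall>\<alpha>\<in>nodes A. b \<alpha> > 0" and rep: "represents K A p E"
    and generic: "\<And>vs ks. mixed_owner_cycle K A vs ks \<Longrightarrow>
      (\<Prod>i<length vs. g (ks ! i, vs ! i)) \<noteq> (\<Prod>i<length vs. g (ks ! i, vs ! ((i + 1) mod length vs)))"
  shows "is_forest (nodes A) E"
  unfolding is_forest_def
proof
  assume cyc: "has_cycle (nodes A) E"
  obtain vs ks where "mixed_owner_cycle K A vs ks"
    and "\<And>i. i < length vs \<Longrightarrow> ks ! i \<in> users K \<and>
      vs ! i \<in> supp A p (ks ! i) \<and> vs ! ((i + 1) mod length vs) \<in> supp A p (ks ! i)"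
    using represents_has_cycleE[OF rep cyc] by blast
  then show False using generic nash_cycle_gain_products_eq[OF b_pos] by blast
qed

end

lemma null_sets_PiM_sliceI:
  assumes M: "product_sigma_finite M" and I: "finite I" "c \<in> I"
    and S: "S \<in> sets (PiM I M)"
    and slices: "\<And>x. \<exists>N\<in>null_sets (M c). \<forall>y. x(c := y) \<in> S \<longrightarrow> y \<in> N"
  shows "S \<in> null_sets (PiM I M)"
proof -
  interpret product_sigma_finite M by (fact M)
  define J where "J = I - {c}"
  have IJ: "I = insert c J" "finite J" "c \<notin> J" using I by (auto simp: J_def)
  have "emeasure (PiM I M) S = (\<integral>\<^sup>+ x. indicator S x \<partial>PiM (insert c J) M)"
    using S IJ by simp
  also have "\<dots> = (\<integral>\<^sup>+ x. (\<integral>\<^sup>+ y. indicator S (x(c := y)) \<partial>M c) \<partial>PiM J M)"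
    using S IJ by (intro product_nn_integral_insert) auto
  also have "\<dots> = (\<integral>\<^sup>+ x. 0 \<partial>PiM J M)"
  proof (intro nn_integral_cong)
    fix x
    obtain N where N: "N \<in> null_sets (M c)" "\<forall>y. x(c := y) \<in> S \<longrightarrow> y \<in> N"
      using slices by blast
    have "AE y in M c. indicator S (x(c := y)) = (0::ennreal)"
      using N by (intro AE_I'[OF N(1)]) (auto simp: indicator_def)
    then show "(\<integral>\<^sup>+ y. indicator S (x(c := y)) \<partial>M c) = 0"
      by (simp add: nn_integral_cong_AE)
  qed
  finally show ?thesis using S by (simp add: null_sets_def)
qed

lemma borel_measurable_PiM_component:
  assumes "c \<in> I" "sets M = sets borel"
  shows "(\<lambda>x. x c) \<in> borel_measurable (PiM I (\<lambda>_. M))"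
  using measurable_component_singleton[OF assms(1), of "\<lambda>_. M"] measurable_cong_sets[OF refl assms(2)]
  by blast

lemma AE_PiM_coordinate_not_determined:
  fixes \<mu> :: "real measure"
  assumes \<mu>: "prob_space \<mu>" "sets \<mu> = sets borel" "\<forall>x. emeasure \<mu> {x} = 0"
    and I: "finite I" "c \<in> I"
    and F: "F \<in> borel_measurable (PiM I (\<lambda>_. \<mu>))" "\<And>x y. F (x(c := y)) = F x"
    and R: "R \<in> borel_measurable (PiM I (\<lambda>_. \<mu>))" "\<And>x y. R (x(c := y)) = R x"
  shows "AE x in PiM I (\<lambda>_. \<mu>). F x \<noteq> 0 \<longrightarrow> x c * F x \<noteq> R x"
proof -
  define S where "S = {x \<in> space (PiM I (\<lambda>_. \<mu>)). F x \<noteq> 0 \<and> x c * F x = R x}"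
  have "S = {x \<in> space (PiM I (\<lambda>_. \<mu>)). F x \<noteq> 0} \<inter>
      {x \<in> space (PiM I (\<lambda>_. \<mu>)). x c * F x = R x}"
    by (auto simp: S_def)
  also have "\<dots> \<in> sets (PiM I (\<lambda>_. \<mu>))"
    using F(1) R(1) borel_measurable_PiM_component[OF I(2) \<mu>(2)]
    by (intro sets.Int borel_measurable_neq borel_measurable_eq borel_measurable_times) auto
  finally have "S \<in> sets (PiM I (\<lambda>_. \<mu>))" .
  moreover have "\<exists>N\<in>null_sets \<mu>. \<forall>y. x(c := y) \<in> S \<longrightarrow> y \<in> N" for x
  proof
    show "{R x / F x} \<in> null_sets \<mu>" using \<mu> by (auto intro: null_setsI)
    show "\<forall>y. x(c := y) \<in> S \<longrightarrow> y \<in> {R x / F x}"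
      using F(2) R(2) by (auto simp: S_def field_simps)
  qed
  ultimately have "S \<in> null_sets (PiM I (\<lambda>_. \<mu>))"
    using \<mu>(1) I by (intro null_sets_PiM_sliceI)
      (auto simp: product_sigma_finite_def prob_space_imp_sigma_finite)
  then show ?thesis by (rule AE_I') (auto simp: S_def)
qed

lemma AE_PiM_positive:
  fixes \<mu> :: "real measure"
  assumes "prob_space \<mu>" "sets \<mu> = sets borel" "emeasure \<mu> {0<..} = 1" "finite I"
  shows "AE x in PiM I (\<lambda>_. \<mu>). \<forall>c\<in>I. x c > 0"
proof (intro eventually_ball_finite ballI)
  have "AE y in \<mu>. y \<in> {0<..}"
    using assms(1-3) by (subst prob_space.AE_in_set_eq_1) (auto simp: measure_def)
  then show "AE x in PiM I (\<lambda>_. \<mu>). x c > 0" if "c \<in> I" for c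
    using assms(1) that by (intro AE_PiM_component) auto
qed fact

lemma mixed_owner_cycle_isolated_gainE:
  assumes cycle: "mixed_owner_cycle K A vs ks"
  obtains j where "j < length vs"
    and "\<And>m. m < length vs \<Longrightarrow> m \<noteq> j \<Longrightarrow> (ks ! m, vs ! m) \<noteq> (ks ! j, vs ! j)"
    and "\<And>m. m < length vs \<Longrightarrow> (ks ! m, vs ! ((m + 1) mod length vs)) \<noteq> (ks ! j, vs ! j)"
proof -
  define n where "n = length vs"
  have vs_inj: "vs ! m = vs ! l \<longleftrightarrow> m = l" if "m < n" "l < n" for m l
    using cycle that by (simp add: n_def mixed_owner_cycle_def nth_eq_iff_index_eq)
  obtain i where i: "i < n" "ks ! i \<noteq> ks ! ((i + 1) mod n)"
    using cycle by (auto simp: mixed_owner_cycle_def n_def)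
  define j where "j = (i + 1) mod n"
  have j: "j < n" using i by (simp add: j_def)
  have "(ks ! m, vs ! ((m + 1) mod n)) \<noteq> (ks ! j, vs ! j)" if m: "m < n" for m
  proof
    assume eq: "(ks ! m, vs ! ((m + 1) mod n)) = (ks ! j, vs ! j)"
    then have "m = i"
      using vs_inj[of "(m + 1) mod n" j] m i j Suc_mod_inj[of m n i] by (simp add: j_def)
    with eq i show False by (simp add: j_def)
  qed
  with j vs_inj that show thesis by (simp add: n_def)
qed

lemma AE_mixed_owner_cycle_gain_products_neq:
  fixes \<mu> :: "real measure"
  assumes \<mu>: "prob_space \<mu>" "sets \<mu> = sets borel" "\<forall>x. emeasure \<mu> {x} = 0"
    and cycle: "mixed_owner_cycle K A vs ks"
  shows "AE g in PiM (users K \<times> nodes A) (\<lambda>_. \<mu>). (\<forall>c\<in>users K \<times> nodes A. g c > 0) \<longrightarrow>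
           (\<Prod>i<length vs. g (ks ! i, vs ! i)) \<noteq> (\<Prod>i<length vs. g (ks ! i, vs ! ((i + 1) mod length vs)))"
proof -
  define I where "I = users K \<times> nodes A"
  define n where "n = length vs"
  have fin: "finite I" by (simp add: I_def users_def nodes_def)
  have in_I: "(ks ! m, vs ! l) \<in> I" if "m < n" "l < n" for m l
    using cycle that by (auto simp: I_def n_def mixed_owner_cycle_def)
  obtain j where j: "j < n"
    and left: "\<And>m. m < n \<Longrightarrow> m \<noteq> j \<Longrightarrow> (ks ! m, vs ! m) \<noteq> (ks ! j, vs ! j)"
    and right: "\<And>m. m < n \<Longrightarrow> (ks ! m, vs ! ((m + 1) mod n)) \<noteq> (ks ! j, vs ! j)"
    using mixed_owner_cycle_isolated_gainE[OF cycle] unfolding n_def by blast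
  define c where "c = (ks ! j, vs ! j)"
  define F where "F g = (\<Prod>m\<in>{..<n} - {j}. g (ks ! m, vs ! m))" for g :: "nat \<times> nat \<Rightarrow> real"
  define R where "R g = (\<Prod>m<n. g (ks ! m, vs ! ((m + 1) mod n)))" for g :: "nat \<times> nat \<Rightarrow> real"
  have split: "(\<Prod>m<n. g (ks ! m, vs ! m)) = g c * F g" for g :: "nat \<times> nat \<Rightarrow> real"
    unfolding F_def c_def using j by (subst prod.remove[of _ j]) auto
  have F_upd: "F (x(c := y)) = F x" for x y
    unfolding F_def c_def using left by (intro prod.cong) auto
  have R_upd: "R (x(c := y)) = R x" for x y
    unfolding R_def c_def using right by (intro prod.cong) auto
  have component: "(\<lambda>g. g d) \<in> borel_measurable (PiM I (\<lambda>_. \<mu>))" if "d \<in> I" for d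
    using borel_measurable_PiM_component[OF that \<mu>(2)] .
  have "F \<in> borel_measurable (PiM I (\<lambda>_. \<mu>))" "R \<in> borel_measurable (PiM I (\<lambda>_. \<mu>))"
    unfolding F_def R_def by (intro borel_measurable_prod component in_I; simp)+
  then have "AE g in PiM I (\<lambda>_. \<mu>). F g \<noteq> 0 \<longrightarrow> g c * F g \<noteq> R g"
    using \<mu> fin in_I[OF j j] F_upd R_upd
    by (intro AE_PiM_coordinate_not_determined) (auto simp: c_def)
  then have "AE g in PiM I (\<lambda>_. \<mu>). (\<forall>d\<in>I. g d > 0) \<longrightarrow> (\<Prod>m<n. g (ks ! m, vs ! m)) \<noteq> R g"
  proof eventually_elim
    case (elim g)
    show ?case
    proof
      assume "\<forall>d\<in>I. g d > 0"
      then have "F g > 0" unfolding F_def using in_I by (intro prod_pos) auto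
      then show "(\<Prod>m<n. g (ks ! m, vs ! m)) \<noteq> R g" using elim split by simp
    qed
  qed
  then show ?thesis unfolding I_def R_def n_def by simp
qed

theorem lemma1:
  fixes K A :: nat
    and P b \<sigma>2 :: "nat \<Rightarrow> real"
    and \<mu> :: "real measure"
  assumes "K \<ge> 1" and "A \<ge> 1"
    and "\<forall>k\<in>users K. P k > 0"
    and "\<forall>\<alpha>\<in>nodes A. b \<alpha> > 0"
    and "\<forall>\<alpha>\<in>nodes A. \<sigma>2 \<alpha> > 0"
    and "prob_space \<mu>" and "sets \<mu> = sets borel"
    and "\<forall>x. emeasure \<mu> {x} = 0"
    and "emeasure \<mu> {0<..} = 1"
  shows "AE g in PiM (users K \<times> nodes A) (\<lambda>_. \<mu>).
           \<forall>p E. nash_eq K A P b \<sigma>2 g p \<longrightarrow> represents K A p E \<longrightarrow> is_forest (nodes A) E"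
proof -
  let ?M = "PiM (users K \<times> nodes A) (\<lambda>_. \<mu>)"
  have "AE g in ?M. \<forall>c\<in>users K \<times> nodes A. g c > 0"
    using assms(6,7,9) by (intro AE_PiM_positive) (auto simp: users_def nodes_def)
  moreover have "AE g in ?M. \<forall>(vs, ks)\<in>{(vs, ks). mixed_owner_cycle K A vs ks}.
      (\<forall>c\<in>users K \<times> nodes A. g c > 0) \<longrightarrow>
      (\<Prod>i<length vs. g (ks ! i, vs ! i)) \<noteq> (\<Prod>i<length vs. g (ks ! i, vs ! ((i + 1) mod length vs)))"
    using AE_mixed_owner_cycle_gain_products_neq[OF assms(6-8)] by (intro AE_ball_countable') auto
  ultimately show ?thesis
  proof eventually_elim
    case (elim g)
    then have "\<forall>k\<in>users K. \<forall>\<alpha>\<in>nodes A. g (k, \<alpha>) \<ge> 0" by (auto intro: less_imp_le)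
    with elim show ?case
      using nash_represents_is_forest[OF assms(5) _ _ assms(4)] by blast
  qed
qed

end
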